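(* For contexts $\Gamma,\Delta$ and formulas $A,B$: if $\Gamma\vdash A$ has a focused derivation and $\Delta\vdash B$ has a focused derivation, then $\Gamma,\Delta\vdash A\bullet B$ has a focused derivation.
   Context: Formulas are built from atoms ($p,q,\dots$) by a binary product: every formula is an atom or $A\bullet B$. A context is a finite (possibly empty) list of formulas; commas denote concatenation. A context is irreducible if its leftmost formula is not a product (it is empty or begins with an atom). A focused derivation of a sequent is a finite derivation tree with no undischarged premises using only the rules: ($\bullet L$): from $A,B,\Delta\vdash C$ infer $A\bullet B,\Delta\vdash C$; ($\bullet R^{foc}$): from $\Gamma\vdash A$ and $\Delta\vdash B$ infer $\Gamma,\Delta\vdash A\bullet B$, where $\Gamma$ is irreducible; and ($id^{atm}$): $p\vdash p$ for atoms $p$. *)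

theory Defs
  imports Main
begin

datatype 'a fma = Atom 'a | Prod "'a fma" "'a fma"

fun irreducible :: "'a fma list \<Rightarrow> bool" where
  "irreducible [] = True"
| "irreducible (Atom p # _) = True"
| "irreducible (Prod _ _ # _) = False"

inductive focused :: "'a fma list \<Rightarrow> 'a fma \<Rightarrow> bool" where
  prodL: "focused (A # B # \<Delta>) C \<Longrightarrow> focused (Prod A B # \<Delta>) C"
| prodR: "irreducible \<Gamma> \<Longrightarrow> focused \<Gamma> A \<Longrightarrow> focused \<Delta> B \<Longrightarrow> focused (\<Gamma> @ \<Delta>) (Prod A B)"
| idatm: "focused [Atom p] (Atom p)"

end

theory Submission
  imports Defs
begin

text \<open>Induction on the derivation of \<open>\<Gamma> \<turnstile> A\<close>. If it ends with \<open>\<bullet>L\<close>, apply the induction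
  hypothesis to its premise and reapply \<open>\<bullet>L\<close>. If \<open>\<Gamma>\<close> is irreducible (last rule \<open>id\<close> or
  \<open>\<bullet>R\<close>), apply \<open>\<bullet>R\<close> directly; this is possible because derivable contexts are nonempty,
  so irreducibility of \<open>\<Gamma>\<close> is inherited by \<open>\<Gamma>, \<Delta>\<close>.\<close>

lemma focused_nonempty: "focused \<Gamma> A \<Longrightarrow> \<Gamma> \<noteq> []"
  by (induction rule: focused.induct) auto

lemma irreducible_append:
  "irreducible \<Gamma> \<Longrightarrow> \<Gamma> \<noteq> [] \<Longrightarrow> irreducible (\<Gamma> @ \<Delta>)"
  by (cases \<Gamma> rule: irreducible.cases) auto

theorem lemma1p15:
  fixes \<Gamma> \<Delta> :: "'a fma list" and A B :: "'a fma"
  assumes "focused \<Gamma> A" and "focused \<Delta> B"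
  shows "focused (\<Gamma> @ \<Delta>) (Prod A B)"
  using assms
proof (induction arbitrary: \<Delta> B rule: focused.induct)
  case (prodL A' B' \<Gamma>' C)
  then have "focused (A' # B' # \<Gamma>' @ \<Delta>) (Prod C B)" by simp
  then show ?case by (simp add: focused.prodL)
next
  case (prodR \<Gamma>1 A1 \<Gamma>2 A2)
  have "focused (\<Gamma>1 @ \<Gamma>2) (Prod A1 A2)"
    using prodR.hyps by (rule focused.prodR)
  moreover have "irreducible (\<Gamma>1 @ \<Gamma>2)"
    using prodR.hyps by (simp add: irreducible_append focused_nonempty)
  ultimately show ?case
    using prodR.prems focused.prodR by fastforce
next
  case (idatm p)
  then show ?case using focused.prodR[of "[Atom p]"] focused.idatm by fastforce
qed

end
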